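(* Let $A$ be a finite set of points in the plane with distinct $x$-coordinates, sorted by $x$-coordinate, and let a vertical line $V$ split $A$ into its first half $A_1$ (left of $V$) and second half $A_2$ (right of $V$). Let $\mathit{UH}(A_1)$ and $\mathit{UH}(A_2)$ be the upper convex hulls of $A_1$ and $A_2$, each augmented with vertical dummy edges incident to its first and last vertices. Let $H_1$ and $H_2$ be (possibly non-contiguous) subsequences of the edges of $\mathit{UH}(A_1)$ and $\mathit{UH}(A_2)$, respectively, ordered by decreasing slope, each containing the dummy vertical edges of the respective hull as its first and last edges. For a non-vertical edge $e$ in $H_1$ (resp. $H_2$), let $d$ be the edge of $H_2$ (resp. $H_1$) with smallest slope greater than the slope of $e$, and let $f$ be the edge of $H_2$ (resp. $H_1$) with largest slope less than the slope of $e$ ($d$ and $f$ need not be consecutive edges of the hull). Then there is a comparison rule that takes as input only the three edges $d$, $e$, $f$ and whose outcome is always one of the following: (1) $e$ is assigned its correct label $L$ or $R$; or (2) $e$ is assigned the label $X$, and $d$ is correctly labeled $L$ and $f$ is correctly labeled $R$.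
   Context: Labels: an edge $g$ of $\mathit{UH}(A_1)$ or $\mathit{UH}(A_2)$ is correctly labeled $L$ if the line of slope equal to the slope of $g$ that is tangent to (supports from above) the upper hull $\mathit{UH}(A_1\cup A_2)$ is tangent to $\mathit{UH}(A_1)$, and is correctly labeled $R$ if that tangent line is tangent to $\mathit{UH}(A_2)$. The label $X$ means "not yet determined". The upper convex hull of a point set is the part of the boundary of its convex hull visible from above, viewed as a sequence of edges ordered left to right (equivalently, by decreasing slope). *)

theory Defs
  imports Complex_Main "HOL-Library.Extended_Real"
begin

type_synonym point = "real \<times> real"

text \<open>Edges of an (augmented) upper hull: a proper segment from its left endpoint to
its right endpoint, the vertical dummy edge incident to the first (leftmost) vertex
(slope +infinity), and the vertical dummy edge incident to the last (rightmost)
vertex (slope -infinity).\<close>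
datatype edge = Seg point point | VUp point | VDown point

fun eslope :: "edge \<Rightarrow> ereal" where
  "eslope (Seg p q) = ereal ((snd q - snd p) / (fst q - fst p))"
| "eslope (VUp p) = \<infinity>"
| "eslope (VDown p) = - \<infinity>"

definition is_vertical :: "edge \<Rightarrow> bool" where
  "is_vertical g \<longleftrightarrow> eslope g = \<infinity> \<or> eslope g = - \<infinity>"

definition below_line :: "point \<Rightarrow> point \<Rightarrow> point \<Rightarrow> bool" where
  "below_line p q r \<longleftrightarrow>
     (snd r - snd p) * (fst q - fst p) \<le> (snd q - snd p) * (fst r - fst p)"

definition on_line :: "point \<Rightarrow> point \<Rightarrow> point \<Rightarrow> bool" where
  "on_line p q r \<longleftrightarrow>
     (snd r - snd p) * (fst q - fst p) = (snd q - snd p) * (fst r - fst p)"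

text \<open>Edges of the upper convex hull of a finite point set (edges join consecutive
extreme points), augmented with the two vertical dummy edges.\<close>
definition uh_edges :: "point set \<Rightarrow> edge set" where
  "uh_edges A =
     {Seg p q | p q. p \<in> A \<and> q \<in> A \<and> fst p < fst q \<and> (\<forall>r\<in>A. below_line p q r)
                  \<and> (\<forall>r\<in>A. on_line p q r \<longrightarrow> fst p \<le> fst r \<and> fst r \<le> fst q)}
   \<union> {VUp p | p. p \<in> A \<and> (\<forall>q\<in>A. fst p \<le> fst q)}
   \<union> {VDown p | p. p \<in> A \<and> (\<forall>q\<in>A. fst q \<le> fst p)}"

datatype label = L | R | X

text \<open>The line of slope s supporting (tangent from above to) the upper hull of U
touches the upper hull of B (B a subset of U).\<close>
definition supports :: "point set \<Rightarrow> point set \<Rightarrow> ereal \<Rightarrow> bool" where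
  "supports B U s =
     (case s of
        ereal c \<Rightarrow> (\<exists>p\<in>B. \<forall>q\<in>U. snd q - c * fst q \<le> snd p - c * fst p)
      | PInfty \<Rightarrow> (\<exists>p\<in>B. \<forall>q\<in>U. fst p \<le> fst q)
      | MInfty \<Rightarrow> (\<exists>p\<in>B. \<forall>q\<in>U. fst q \<le> fst p))"

definition correctly_labeled :: "point set \<Rightarrow> point set \<Rightarrow> edge \<Rightarrow> label \<Rightarrow> bool" where
  "correctly_labeled A1 A2 g lab \<longleftrightarrow>
     (lab = L \<and> supports A1 (A1 \<union> A2) (eslope g))
   \<or> (lab = R \<and> supports A2 (A1 \<union> A2) (eslope g))"

end

(* Let e lie on the hull of the left half, with slope s and left end a, and let q be the
   right end of d, a point of the right half. A line of slope s supports a set exactly at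
   the maximisers of the intercept snd - s * fst, and a maximises it on the left half.
   If q is on or above the line of e, the line of slope s through q supports the union,
   so e is labelled R. Otherwise the support line of d, which passes through q and is
   steeper than e, lies below a, so d is labelled L. Points of the right half left of q
   lie below the line of slope s through q (by d), those right of q below the line of f.
   Hence if the line of f passes below the line of e at the abscissa of q, the whole
   set lies below the line of e and e is labelled L; otherwise the line of f, being
   flatter than e, lies above the whole left half and f is labelled R.
   An edge of the right hull is handled by reflecting the picture in a vertical line. *)

theory Submission
  imports Defs
begin

definition intercept :: "real \<Rightarrow> point \<Rightarrow> real" where
  "intercept c p = snd p - c * fst p"

definition slope :: "point \<Rightarrow> point \<Rightarrow> real" where
  "slope p q = (snd q - snd p) / (fst q - fst p)"

definition line_point :: "real \<Rightarrow> point \<Rightarrow> real \<Rightarrow> point" where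
  "line_point c p x = (x, snd p + c * (x - fst p))"

lemma intercept_line_point [simp]: "intercept c (line_point c p x) = intercept c p"
  unfolding intercept_def line_point_def by (simp add: algebra_simps)

lemma fst_line_point [simp]: "fst (line_point c p x) = x"
  by (simp add: line_point_def)

lemma intercept_diff_mono:
  assumes "s \<le> t" "fst x \<le> fst y"
  shows "intercept t y - intercept t x \<le> intercept s y - intercept s x"
proof -
  have "0 \<le> (t - s) * (fst y - fst x)" using assms by simp
  then show ?thesis unfolding intercept_def by (simp add: algebra_simps)
qed

lemma eslope_Seg [simp]: "eslope (Seg p q) = ereal (slope p q)"
  by (simp add: slope_def)

declare eslope.simps(1) [simp del]

lemma Seg_in_uh_edgesD:
  assumes "Seg p q \<in> uh_edges S"
  shows "p \<in> S" "q \<in> S" "fst p < fst q"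
    and "\<And>r. r \<in> S \<Longrightarrow> intercept (slope p q) r \<le> intercept (slope p q) p"
    and "intercept (slope p q) q = intercept (slope p q) p"
proof -
  from assms have h: "p \<in> S" "q \<in> S" "fst p < fst q" "\<forall>r\<in>S. below_line p q r"
    unfolding uh_edges_def by auto
  then show "p \<in> S" "q \<in> S" "fst p < fst q" by auto
  have k: "slope p q * (fst q - fst p) = snd q - snd p" using h(3) unfolding slope_def by simp
  then show "intercept (slope p q) q = intercept (slope p q) p"
    unfolding intercept_def by (simp add: algebra_simps)
  fix r assume "r \<in> S"
  then have "(snd r - snd p) * (fst q - fst p) \<le> (slope p q * (fst q - fst p)) * (fst r - fst p)"
    using h(4) k unfolding below_line_def by auto
  then have "(snd r - snd p) * (fst q - fst p) \<le> (slope p q * (fst r - fst p)) * (fst q - fst p)"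
    by (simp add: algebra_simps)
  then have "snd r - snd p \<le> slope p q * (fst r - fst p)" using h(3) by simp
  then show "intercept (slope p q) r \<le> intercept (slope p q) p"
    unfolding intercept_def by (simp add: algebra_simps)
qed

lemma VUp_in_uh_edgesD: "VUp p \<in> uh_edges S \<Longrightarrow> p \<in> S \<and> (\<forall>q\<in>S. fst p \<le> fst q)"
  unfolding uh_edges_def by auto

lemma VDown_in_uh_edgesD: "VDown p \<in> uh_edges S \<Longrightarrow> p \<in> S \<and> (\<forall>q\<in>S. fst q \<le> fst p)"
  unfolding uh_edges_def by auto

fun right_end :: "edge \<Rightarrow> point" where
  "right_end (Seg p q) = q" | "right_end (VUp p) = p" | "right_end (VDown p) = p"

lemma right_end_in_uh_edges: "g \<in> uh_edges S \<Longrightarrow> right_end g \<in> S"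
  by (cases g) (auto dest: Seg_in_uh_edgesD VUp_in_uh_edgesD VDown_in_uh_edgesD)

lemma intercept_le_right_end:
  assumes "d \<in> uh_edges S" "ereal s < eslope d" "inj_on fst S" "c \<in> S"
    and "fst c \<le> fst (right_end d)"
  shows "intercept s c \<le> intercept s (right_end d)"
proof (cases d)
  case (Seg u v)
  have "intercept (slope u v) c \<le> intercept (slope u v) v"
    using Seg_in_uh_edgesD[OF assms(1)[unfolded Seg]] assms(4) by simp
  moreover have "s \<le> slope u v" using assms(2) Seg by simp
  ultimately show ?thesis
    using intercept_diff_mono[of s "slope u v" c v] assms(5) Seg by simp
next
  case (VUp p)
  then have "fst c = fst p" "p \<in> S"
    using VUp_in_uh_edgesD[OF assms(1)[unfolded VUp]] assms(4,5) by (auto intro: antisym)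
  then have "c = p" using assms(3,4) by (auto dest: inj_onD)
  then show ?thesis using VUp by simp
next
  case (VDown p)
  then show ?thesis using assms(2) by simp
qed

lemma finite_has_max:
  fixes g :: "'a \<Rightarrow> real"
  assumes "finite B" "B \<noteq> {}"
  obtains p where "p \<in> B" "\<And>x. x \<in> B \<Longrightarrow> g x \<le> g p"
proof -
  have "Max (g ` B) \<in> g ` B" using assms by simp
  then obtain p where "p \<in> B" "g p = Max (g ` B)" by auto
  then show thesis using that assms(1) by simp
qed

lemma supports_ereal:
  assumes "finite B" "b \<in> B" "U \<subseteq> B \<union> C" "\<And>c. c \<in> C \<Longrightarrow> intercept s c \<le> intercept s b"
  shows "supports B U (ereal s)"
proof -
  obtain p where p: "p \<in> B" "\<And>x. x \<in> B \<Longrightarrow> intercept s x \<le> intercept s p"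
    using finite_has_max[of B "intercept s"] assms(1,2) by blast
  have "\<forall>q\<in>U. intercept s q \<le> intercept s p"
    using p assms(3) order_trans[OF assms(4) p(2)[OF assms(2)]] by blast
  then show ?thesis using p(1) unfolding supports_def intercept_def by (simp only: ereal.case) blast
qed

lemma supports_PInfty:
  assumes "finite A1" "A1 \<noteq> {}" "\<forall>a\<in>A1. \<forall>b\<in>A2. fst a < fst b"
  shows "supports A1 (A1 \<union> A2) \<infinity>"
proof -
  obtain p where p: "p \<in> A1" "\<And>x. x \<in> A1 \<Longrightarrow> - fst x \<le> - fst p"
    using finite_has_max[of A1 "\<lambda>x. - fst x"] assms by blast
  have "\<forall>q\<in>A1 \<union> A2. fst p \<le> fst q"
    using p assms(3) by (metis UnE less_imp_le neg_le_iff_le)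
  then show ?thesis using p(1) unfolding supports_def by auto
qed

lemma supports_MInfty:
  assumes "finite A2" "A2 \<noteq> {}" "\<forall>a\<in>A1. \<forall>b\<in>A2. fst a < fst b"
  shows "supports A2 (A1 \<union> A2) (- \<infinity>)"
proof -
  obtain p where p: "p \<in> A2" "\<And>x. x \<in> A2 \<Longrightarrow> fst x \<le> fst p"
    using finite_has_max[of A2 fst] assms by blast
  have "\<forall>q\<in>A1 \<union> A2. fst q \<le> fst p"
    using p assms(3) by (metis UnE less_imp_le)
  then show ?thesis using p(1) unfolding supports_def by auto
qed

definition on_or_above :: "edge \<Rightarrow> point \<Rightarrow> bool" where
  "on_or_above g z = (case g of
     Seg p p' \<Rightarrow> intercept (slope p p') p \<le> intercept (slope p p') z
   | _ \<Rightarrow> False)"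

lemma Seg_if_on_or_above:
  assumes "on_or_above g z"
  obtains p p' where "g = Seg p p'" "intercept (slope p p') p \<le> intercept (slope p p') z"
  using assms unfolding on_or_above_def by (cases g) auto

lemma correctly_labeled_L_above:
  assumes "finite A1" "A1 \<noteq> {}" "\<forall>a\<in>A1. \<forall>b\<in>A2. fst a < fst b"
    and "a \<in> A1" "d \<in> uh_edges A2" "ereal s < eslope d"
    and "intercept s (right_end d) < intercept s a"
  shows "correctly_labeled A1 A2 d L"
proof (cases d)
  case (Seg u v)
  have "v \<in> A2" using Seg_in_uh_edgesD(2) assms(5) Seg by blast
  then have "s \<le> slope u v" "fst a \<le> fst v"
    using assms(3,4,6) Seg by (auto intro: less_imp_le)
  then have "intercept (slope u v) v < intercept (slope u v) a"
    using intercept_diff_mono[of s "slope u v" a v] assms(7) Seg by simp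
  moreover have "\<forall>c\<in>A2. intercept (slope u v) c \<le> intercept (slope u v) v"
    using Seg_in_uh_edgesD[OF assms(5)[unfolded Seg]] by simp
  ultimately have "supports A1 (A1 \<union> A2) (ereal (slope u v))"
    by (intro supports_ereal[OF assms(1,4), of _ A2]) force+
  then show ?thesis using Seg unfolding correctly_labeled_def by simp
next
  case (VUp p)
  then show ?thesis using supports_PInfty[OF assms(1-3)] unfolding correctly_labeled_def by simp
next
  case (VDown p)
  then show ?thesis using assms(6) by simp
qed

lemma correctly_labeled_R_below:
  assumes "finite A2" "A2 \<noteq> {}" "\<forall>a\<in>A1. \<forall>b\<in>A2. fst a < fst b"
    and "f \<in> uh_edges A2" "eslope f < ereal s" "\<not> on_or_above f z"
    and "\<forall>c\<in>A1. intercept s c \<le> intercept s z \<and> fst c \<le> fst z"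
  shows "correctly_labeled A1 A2 f R"
proof (cases f)
  case (Seg p p')
  define t where "t = slope p p'"
  have "t \<le> s" "intercept t z < intercept t p"
    using assms(5,6) Seg unfolding t_def on_or_above_def by auto
  have "intercept t c \<le> intercept t p" if "c \<in> A1" for c
  proof -
    have "intercept s z - intercept s c \<le> intercept t z - intercept t c"
      using intercept_diff_mono[OF \<open>t \<le> s\<close>, of c z] assms(7) that by simp
    then show ?thesis using assms(7) that \<open>intercept t z < intercept t p\<close> by force
  qed
  then have "supports A2 (A2 \<union> A1) (ereal t)"
    using supports_ereal[OF assms(1) Seg_in_uh_edgesD(1)[OF assms(4)[unfolded Seg]]] by blast
  then show ?thesis using Seg unfolding correctly_labeled_def t_def by (simp add: Un_commute)
next
  case (VUp p)
  then show ?thesis using assms(5) by simp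
next
  case (VDown p)
  then show ?thesis using supports_MInfty[OF assms(1-3)] unfolding correctly_labeled_def by simp
qed

lemma supports_left_if_on_or_above:
  assumes "finite A1" "inj_on fst A2" "a \<in> A1" "\<forall>r\<in>A1. intercept s r \<le> intercept s a"
    and "d \<in> uh_edges A2" "ereal s < eslope d" "intercept s (right_end d) < intercept s a"
    and "f \<in> uh_edges A2" "eslope f < ereal s"
    and "on_or_above f (line_point s a (fst (right_end d)))"
  shows "supports A1 (A1 \<union> A2) (ereal s)"
proof -
  define q where "q = right_end d"
  define z where "z = line_point s a (fst q)"
  obtain p p' where f: "f = Seg p p'" and pz: "intercept (slope p p') p \<le> intercept (slope p p') z"
    using Seg_if_on_or_above assms(10) unfolding z_def q_def by blast
  have "intercept s c \<le> intercept s a" if c: "c \<in> A2" for c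
  proof (cases "fst c \<le> fst q")
    case True
    then show ?thesis
      using intercept_le_right_end[OF assms(5,6,2) c] assms(7) unfolding q_def by simp
  next
    case False
    have "intercept s c - intercept s z \<le> intercept (slope p p') c - intercept (slope p p') z"
      using intercept_diff_mono[of "slope p p'" s z c] assms(9) f False
      unfolding z_def by simp
    moreover have "intercept (slope p p') c \<le> intercept (slope p p') p"
      using Seg_in_uh_edgesD(4)[OF assms(8)[unfolded f] c] .
    ultimately show ?thesis using pz unfolding z_def by simp
  qed
  then show ?thesis using supports_ereal[OF assms(1,3), of "A1 \<union> A2" A2 s] assms(4) by blast
qed

definition left_rule :: "edge \<Rightarrow> edge \<Rightarrow> edge \<Rightarrow> label" where
  "left_rule d e f = (case e of
     Seg a b \<Rightarrow>
       let s = slope a b; q = right_end d in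
       if intercept s a \<le> intercept s q then R
       else if on_or_above f (line_point s a (fst q)) then L
       else X
   | _ \<Rightarrow> X)"

definition sound_label :: "point set \<Rightarrow> point set \<Rightarrow> label \<Rightarrow> edge \<Rightarrow> edge \<Rightarrow> edge \<Rightarrow> bool" where
  "sound_label A1 A2 lab d e f \<longleftrightarrow>
     (lab = L \<and> correctly_labeled A1 A2 e L)
   \<or> (lab = R \<and> correctly_labeled A1 A2 e R)
   \<or> (lab = X \<and> correctly_labeled A1 A2 d L \<and> correctly_labeled A1 A2 f R)"

lemma left_rule_sound:
  assumes fin: "finite A1" "finite A2" "A1 \<noteq> {}" "A2 \<noteq> {}"
    and sep: "\<forall>a\<in>A1. \<forall>b\<in>A2. fst a < fst b" and inj: "inj_on fst A2"
    and e: "e \<in> uh_edges A1" "\<not> is_vertical e"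
    and d: "d \<in> uh_edges A2" "eslope e < eslope d"
    and f: "f \<in> uh_edges A2" "eslope f < eslope e"
  shows "sound_label A1 A2 (left_rule d e f) d e f"
proof -
  obtain a b where ab: "e = Seg a b" using e(2) by (cases e) (auto simp: is_vertical_def)
  define s where "s = slope a b"
  define q where "q = right_end d"
  have es: "eslope e = ereal s" unfolding ab s_def by simp
  have a: "a \<in> A1" "\<forall>r\<in>A1. intercept s r \<le> intercept s a"
    using Seg_in_uh_edgesD[OF e(1)[unfolded ab]] unfolding s_def by auto
  have q: "q \<in> A2" using right_end_in_uh_edges[OF d(1)] unfolding q_def .
  have rule: "left_rule d e f = (if intercept s a \<le> intercept s q then R
      else if on_or_above f (line_point s a (fst q)) then L else X)"
    unfolding left_rule_def ab s_def q_def by simp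
  show ?thesis
  proof (cases "intercept s a \<le> intercept s q")
    case True
    then have "supports A2 (A1 \<union> A2) (ereal s)"
      using supports_ereal[OF fin(2) q, of "A1 \<union> A2" A1 s] a(2) by force
    then show ?thesis using True rule es unfolding sound_label_def correctly_labeled_def by simp
  next
    case False
    show ?thesis
    proof (cases "on_or_above f (line_point s a (fst q))")
      case True
      then have "supports A1 (A1 \<union> A2) (ereal s)"
        using supports_left_if_on_or_above[OF fin(1) inj a d(1)] False d(2) f es
        unfolding q_def by simp
      then show ?thesis using True False rule es unfolding sound_label_def correctly_labeled_def by simp
    next
      case above: False
      have "\<forall>c\<in>A1. intercept s c \<le> intercept s (line_point s a (fst q)) \<and> fst c \<le> fst (line_point s a (fst q))"
        using a(2) sep q by (auto intro: less_imp_le)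
      then have "correctly_labeled A1 A2 f R"
        using correctly_labeled_R_below[OF fin(2,4) sep f(1)] f(2) es above by simp
      moreover have "correctly_labeled A1 A2 d L"
        using correctly_labeled_L_above[OF fin(1,3) sep a(1) d(1)] d(2) es False
        unfolding q_def by simp
      ultimately show ?thesis using False above rule unfolding sound_label_def by simp
    qed
  qed
qed

definition reflect :: "point \<Rightarrow> point" where
  "reflect p = (- fst p, snd p)"

lemma fst_reflect [simp]: "fst (reflect p) = - fst p"
  and snd_reflect [simp]: "snd (reflect p) = snd p"
  by (simp_all add: reflect_def)

lemma slope_reflect [simp]: "slope (reflect q) (reflect p) = - slope p q"
  unfolding slope_def by (simp add: minus_divide_left[of "snd q - snd p"])

fun reflect_edge :: "edge \<Rightarrow> edge" where
  "reflect_edge (Seg p q) = Seg (reflect q) (reflect p)"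
| "reflect_edge (VUp p) = VDown (reflect p)"
| "reflect_edge (VDown p) = VUp (reflect p)"

lemma eslope_reflect_edge [simp]: "eslope (reflect_edge g) = - eslope g"
  by (cases g) simp_all

lemma is_vertical_reflect_edge [simp]: "is_vertical (reflect_edge g) \<longleftrightarrow> is_vertical g"
  by (cases g) (auto simp: is_vertical_def)

lemma below_line_reflect [simp]:
  "below_line (reflect q) (reflect p) (reflect r) \<longleftrightarrow> below_line p q r"
  unfolding below_line_def by (simp add: algebra_simps)

lemma on_line_reflect [simp]:
  "on_line (reflect q) (reflect p) (reflect r) \<longleftrightarrow> on_line p q r"
  unfolding on_line_def by (simp add: algebra_simps)

lemma reflect_edge_in_uh_edges:
  assumes "g \<in> uh_edges A"
  shows "reflect_edge g \<in> uh_edges (reflect ` A)"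
proof (cases g)
  case (Seg p q)
  then have "p \<in> A" "q \<in> A" "fst p < fst q" "\<forall>r\<in>A. below_line p q r"
    "\<forall>r\<in>A. on_line p q r \<longrightarrow> fst p \<le> fst r \<and> fst r \<le> fst q"
    using assms unfolding uh_edges_def by auto
  then show ?thesis unfolding Seg uh_edges_def
    by (intro UnI1 CollectI exI[of _ "reflect q"] exI[of _ "reflect p"]) auto
next
  case (VUp p)
  then have "p \<in> A" "\<forall>q\<in>A. fst p \<le> fst q" using assms unfolding uh_edges_def by auto
  then show ?thesis unfolding VUp uh_edges_def by (intro UnI2 CollectI exI[of _ "reflect p"]) auto
next
  case (VDown p)
  then have "p \<in> A" "\<forall>q\<in>A. fst q \<le> fst p" using assms unfolding uh_edges_def by auto
  then show ?thesis unfolding VDown uh_edges_def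
    by (intro UnI1 UnI2 CollectI exI[of _ "reflect p"]) auto
qed

lemma supports_reflect:
  "supports (reflect ` B) (reflect ` U) (- s) \<longleftrightarrow> supports B U s"
  by (cases s) (simp_all add: supports_def)

fun mirror_label :: "label \<Rightarrow> label" where
  "mirror_label L = R" | "mirror_label R = L" | "mirror_label X = X"

lemma correctly_labeled_reflect:
  "correctly_labeled (reflect ` A2) (reflect ` A1) (reflect_edge g) lab
     \<longleftrightarrow> correctly_labeled A1 A2 g (mirror_label lab)"
proof -
  have "reflect ` A2 \<union> reflect ` A1 = reflect ` (A1 \<union> A2)" by auto
  then show ?thesis
    unfolding correctly_labeled_def by (cases lab) (simp_all add: supports_reflect)
qed

lemma sound_label_reflect:
  "sound_label (reflect ` A2) (reflect ` A1) lab (reflect_edge f) (reflect_edge e) (reflect_edge d)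
     \<Longrightarrow> sound_label A1 A2 (mirror_label lab) d e f"
  unfolding sound_label_def correctly_labeled_reflect by (cases lab) auto

text \<open>The test decides on which side of the split e lies: the right end of d lies in the
other half.\<close>
definition label_rule :: "edge \<Rightarrow> edge \<Rightarrow> edge \<Rightarrow> label" where
  "label_rule d e f =
     (if fst (right_end e) < fst (right_end d) then left_rule d e f
      else mirror_label (left_rule (reflect_edge f) (reflect_edge e) (reflect_edge d)))"

lemma label_rule_sound:
  assumes fin: "finite A1" "finite A2" "A1 \<noteq> {}" "A2 \<noteq> {}"
    and sep: "\<forall>a\<in>A1. \<forall>b\<in>A2. fst a < fst b" and inj: "inj_on fst (A1 \<union> A2)"
    and sides: "(e \<in> uh_edges A1 \<and> d \<in> uh_edges A2 \<and> f \<in> uh_edges A2)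
              \<or> (e \<in> uh_edges A2 \<and> d \<in> uh_edges A1 \<and> f \<in> uh_edges A1)"
    and e: "\<not> is_vertical e" and slopes: "eslope f < eslope e" "eslope e < eslope d"
  shows "sound_label A1 A2 (label_rule d e f) d e f"
  using sides
proof
  assume h: "e \<in> uh_edges A1 \<and> d \<in> uh_edges A2 \<and> f \<in> uh_edges A2"
  then have "fst (right_end e) < fst (right_end d)"
    using sep right_end_in_uh_edges by blast
  then show ?thesis
    using left_rule_sound[OF fin sep _ _ e] h inj slopes
    unfolding label_rule_def by (auto intro: inj_on_subset)
next
  assume h: "e \<in> uh_edges A2 \<and> d \<in> uh_edges A1 \<and> f \<in> uh_edges A1"
  then have "\<not> fst (right_end e) < fst (right_end d)"
    using sep right_end_in_uh_edges by (meson less_asym)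
  moreover have "sound_label (reflect ` A2) (reflect ` A1)
      (left_rule (reflect_edge f) (reflect_edge e) (reflect_edge d))
      (reflect_edge f) (reflect_edge e) (reflect_edge d)"
  proof (rule left_rule_sound)
    show "inj_on fst (reflect ` A1)"
      using inj by (auto simp: inj_on_def)
    show "\<forall>a\<in>reflect ` A2. \<forall>b\<in>reflect ` A1. fst a < fst b" using sep by auto
  qed (use fin h e slopes in \<open>simp_all add: reflect_edge_in_uh_edges\<close>)
  ultimately show ?thesis unfolding label_rule_def by (simp add: sound_label_reflect)
qed

theorem lemma1:
  shows "\<exists>rule :: edge \<Rightarrow> edge \<Rightarrow> edge \<Rightarrow> label.
    \<forall>(A :: point set) A1 A2 (x0 :: real) H1 H2.
      finite A \<and> inj_on fst A
      \<and> A1 = {p \<in> A. fst p < x0} \<and> A2 = {p \<in> A. x0 < fst p} \<and> A = A1 \<union> A2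
      \<and> A1 \<noteq> {} \<and> A2 \<noteq> {}
      \<and> (card A1 = card A2 \<or> card A1 = card A2 + 1 \<or> card A2 = card A1 + 1)
      \<and> H1 \<subseteq> uh_edges A1 \<and> (\<forall>g\<in>uh_edges A1. is_vertical g \<longrightarrow> g \<in> H1)
      \<and> H2 \<subseteq> uh_edges A2 \<and> (\<forall>g\<in>uh_edges A2. is_vertical g \<longrightarrow> g \<in> H2)
      \<longrightarrow> (\<forall>Ha Hb e d f.
            ((Ha = H1 \<and> Hb = H2) \<or> (Ha = H2 \<and> Hb = H1))
            \<and> e \<in> Ha \<and> \<not> is_vertical e
            \<and> d \<in> Hb \<and> eslope e < eslope d
            \<and> (\<forall>g\<in>Hb. eslope e < eslope g \<longrightarrow> eslope d \<le> eslope g)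
            \<and> f \<in> Hb \<and> eslope f < eslope e
            \<and> (\<forall>g\<in>Hb. eslope g < eslope e \<longrightarrow> eslope g \<le> eslope f)
            \<longrightarrow> (rule d e f = L \<and> correctly_labeled A1 A2 e L)
              \<or> (rule d e f = R \<and> correctly_labeled A1 A2 e R)
              \<or> (rule d e f = X \<and> correctly_labeled A1 A2 d L \<and> correctly_labeled A1 A2 f R))"
proof (intro exI[of _ label_rule] allI impI, elim conjE)
  fix A A1 A2 x0 H1 H2 Ha Hb e d f
  assume A: "finite A" "inj_on fst A" "A1 = {p \<in> A. fst p < x0}" "A2 = {p \<in> A. x0 < fst p}"
      "A = A1 \<union> A2" "A1 \<noteq> {}" "A2 \<noteq> {}"
    and H: "H1 \<subseteq> uh_edges A1" "H2 \<subseteq> uh_edges A2"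
    and halves: "(Ha = H1 \<and> Hb = H2) \<or> (Ha = H2 \<and> Hb = H1)"
    and edges: "e \<in> Ha" "\<not> is_vertical e" "d \<in> Hb" "eslope e < eslope d"
      "f \<in> Hb" "eslope f < eslope e"
  have "sound_label A1 A2 (label_rule d e f) d e f"
  proof (rule label_rule_sound)
    show "finite A1" "finite A2" using A(1,3,4) by simp_all
    show "\<forall>a\<in>A1. \<forall>b\<in>A2. fst a < fst b" using A(3,4) by auto
    show "inj_on fst (A1 \<union> A2)" using A(2,5) by simp
    show "(e \<in> uh_edges A1 \<and> d \<in> uh_edges A2 \<and> f \<in> uh_edges A2)
        \<or> (e \<in> uh_edges A2 \<and> d \<in> uh_edges A1 \<and> f \<in> uh_edges A1)"
      using halves H edges(1,3,5) by blast
  qed (use A(6,7) edges(2,4,6) in simp_all)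
  then show "(label_rule d e f = L \<and> correctly_labeled A1 A2 e L)
      \<or> (label_rule d e f = R \<and> correctly_labeled A1 A2 e R)
      \<or> (label_rule d e f = X \<and> correctly_labeled A1 A2 d L \<and> correctly_labeled A1 A2 f R)"
    unfolding sound_label_def .
qed

end
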